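(* Let $\mathfrak n$ be a seven-dimensional nilpotent but non-abelian real Lie algebra with an invariant scalar product $\langle\cdot,\cdot\rangle$ of index three. Then $\mathrm{ad}(\mathfrak n)$ is not contained in $\mathfrak g_{2(2)}$, where $\mathfrak g_{2(2)}$ is regarded as a subalgebra of $\mathfrak{so}(\mathfrak n,\langle\cdot,\cdot\rangle)\cong\mathfrak{so}_{4,3}$ (i.e. there is no three-form on $\mathfrak n$ of $\mathrm G_{2(2)}$-type compatible with $\langle\cdot,\cdot\rangle$ that is annihilated by $\mathrm{ad}(x)$ for all $x\in\mathfrak n$).
   Context: An invariant scalar product is a nondegenerate symmetric bilinear form satisfying $\langle[x,y],z\rangle=\langle x,[y,z]\rangle$; index three on a seven-dimensional space means signature $(4,3)$ or $(3,4)$. $\mathfrak{so}(\mathfrak n,\langle\cdot,\cdot\rangle)$ is the Lie algebra of endomorphisms skew-symmetric for $\langle\cdot,\cdot\rangle$. $\mathfrak g_{2(2)}$ is the Lie algebra of the split real form $\mathrm G_{2(2)}$ of $\mathrm G_2^{\mathbb C}$, which is the stabilizer subalgebra in $\mathfrak{so}_{4,3}$ of a certain (generic, split-type) three-form. *)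

theory Defs
  imports "HOL-Analysis.Analysis"
begin

text \<open>The seven-dimensional real vector space underlying the Lie algebra is modelled
  as real ^ 7 (every 7-dimensional real vector space is isomorphic to it).\<close>

definition lie_bracket :: "(real^7 \<Rightarrow> real^7 \<Rightarrow> real^7) \<Rightarrow> bool" where
  "lie_bracket br \<longleftrightarrow>
     (\<forall>x. linear (br x)) \<and> (\<forall>y. linear (\<lambda>x. br x y)) \<and>
     (\<forall>x. br x x = 0) \<and>
     (\<forall>x y z. br x (br y z) + br y (br z x) + br z (br x y) = 0)"

fun lower_central :: "(real^7 \<Rightarrow> real^7 \<Rightarrow> real^7) \<Rightarrow> nat \<Rightarrow> (real^7) set" where
  "lower_central br 0 = UNIV"
| "lower_central br (Suc k) = span {br x y | x y. y \<in> lower_central br k}"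

definition nilpotent_lie :: "(real^7 \<Rightarrow> real^7 \<Rightarrow> real^7) \<Rightarrow> bool" where
  "nilpotent_lie br \<longleftrightarrow> (\<exists>k. lower_central br k = {0})"

definition abelian_lie :: "(real^7 \<Rightarrow> real^7 \<Rightarrow> real^7) \<Rightarrow> bool" where
  "abelian_lie br \<longleftrightarrow> (\<forall>x y. br x y = 0)"

definition invariant_scalar_product ::
  "(real^7 \<Rightarrow> real^7 \<Rightarrow> real^7) \<Rightarrow> (real^7 \<Rightarrow> real^7 \<Rightarrow> real) \<Rightarrow> bool" where
  "invariant_scalar_product br B \<longleftrightarrow>
     (\<forall>x. linear (B x)) \<and> (\<forall>x y. B x y = B y x) \<and>
     (\<forall>x. (\<forall>y. B x y = 0) \<longrightarrow> x = 0) \<and>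
     (\<forall>x y z. B (br x y) z = B x (br y z))"

definition pos_index :: "(real^7 \<Rightarrow> real^7 \<Rightarrow> real) \<Rightarrow> nat" where
  "pos_index B = (GREATEST d. \<exists>U. subspace U \<and> dim U = d \<and> (\<forall>x\<in>U. x \<noteq> 0 \<longrightarrow> B x x > 0))"

definition neg_index :: "(real^7 \<Rightarrow> real^7 \<Rightarrow> real) \<Rightarrow> nat" where
  "neg_index B = (GREATEST d. \<exists>U. subspace U \<and> dim U = d \<and> (\<forall>x\<in>U. x \<noteq> 0 \<longrightarrow> B x x < 0))"

definition index_three :: "(real^7 \<Rightarrow> real^7 \<Rightarrow> real) \<Rightarrow> bool" where
  "index_three B \<longleftrightarrow> (pos_index B, neg_index B) \<in> {(4,3), (3,4)}"

text \<open>Elementary 3-form e^a \<and> e^b \<and> e^c evaluated on basis vectors e_i, e_j, e_k.\<close>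
definition kd :: "nat \<Rightarrow> nat \<Rightarrow> real" where
  "kd x y = (if x = y then 1 else 0)"

definition elem3 :: "nat \<Rightarrow> nat \<Rightarrow> nat \<Rightarrow> nat \<Rightarrow> nat \<Rightarrow> nat \<Rightarrow> real" where
  "elem3 a b c i j k =
     kd a i * (kd b j * kd c k - kd b k * kd c j)
   - kd a j * (kd b i * kd c k - kd b k * kd c i)
   + kd a k * (kd b i * kd c j - kd b j * kd c i)"

text \<open>Standard split G2 three-form
  e^123 - e^145 - e^167 - e^246 + e^257 + e^347 + e^356
  and its associated metric diag(1,1,1,-1,-1,-1,-1).\<close>
definition phi_split :: "nat \<Rightarrow> nat \<Rightarrow> nat \<Rightarrow> real" where
  "phi_split i j k =
     elem3 1 2 3 i j k - elem3 1 4 5 i j k - elem3 1 6 7 i j k - elem3 2 4 6 i j k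
   + elem3 2 5 7 i j k + elem3 3 4 7 i j k + elem3 3 5 6 i j k"

definition g_split :: "nat \<Rightarrow> nat \<Rightarrow> real" where
  "g_split i j = (if i = j then (if i \<le> 3 then 1 else -1) else 0)"

text \<open>Its stabilizer in gl(n) is then a copy of g_2(2) inside so(n,B).\<close>
definition g22_form_compatible ::
  "(real^7 \<Rightarrow> real^7 \<Rightarrow> real) \<Rightarrow> (real^7 \<Rightarrow> real^7 \<Rightarrow> real^7 \<Rightarrow> real) \<Rightarrow> bool" where
  "g22_form_compatible B \<phi> \<longleftrightarrow>
     (\<forall>y z. linear (\<lambda>x. \<phi> x y z)) \<and> (\<forall>x z. linear (\<lambda>y. \<phi> x y z)) \<and>
     (\<forall>x y. linear (\<lambda>z. \<phi> x y z)) \<and>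
     (\<exists>b :: nat \<Rightarrow> real^7. \<exists>c :: real.
        inj_on b {1..7} \<and> independent (b ` {1..7}) \<and> c \<noteq> 0 \<and>
        (\<forall>i\<in>{1..7}. \<forall>j\<in>{1..7}. \<forall>k\<in>{1..7}. \<phi> (b i) (b j) (b k) = phi_split i j k) \<and>
        (\<forall>i\<in>{1..7}. \<forall>j\<in>{1..7}. B (b i) (b j) = c * g_split i j))"

definition ad_annihilates ::
  "(real^7 \<Rightarrow> real^7 \<Rightarrow> real^7) \<Rightarrow> (real^7 \<Rightarrow> real^7 \<Rightarrow> real^7 \<Rightarrow> real) \<Rightarrow> real^7 \<Rightarrow> bool" where
  "ad_annihilates br \<phi> x \<longleftrightarrow>
     (\<forall>u v w. \<phi> (br x u) v w + \<phi> u (br x v) w + \<phi> u v (br x w) = 0)"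

end

theory Submission
  imports Defs
begin

(* Invariance of the scalar product makes psi(x, y, z) = <[x, y], z> an alternating
   three-form, and ad(x) is psi(x, -, -) with the last index raised. If every ad(x) lies in
   g_2(2), then psi lies in the intersection of Lambda^3 V with V (x) g_2(2), and this
   intersection is zero: in a basis adapted to the split three-form, the condition is a linear
   system for the 35 components of psi whose only solution is zero. Hence the bracket vanishes. *)

definition skew3 :: "('i \<Rightarrow> 'i \<Rightarrow> 'i \<Rightarrow> real) \<Rightarrow> bool" where
  "skew3 \<psi> \<longleftrightarrow> (\<forall>i j k. \<psi> j i k = - \<psi> i j k) \<and> (\<forall>i j k. \<psi> j k i = \<psi> i j k)"

lemma skew3_swap12: "skew3 \<psi> \<Longrightarrow> \<psi> i j k = - \<psi> j i k"
  unfolding skew3_def by blast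

lemma skew3_cycle: "skew3 \<psi> \<Longrightarrow> \<psi> i j k = \<psi> j k i"
  unfolding skew3_def by metis

lemma skew3_swap23:
  assumes "skew3 \<psi>"
  shows "\<psi> i j k = - \<psi> i k j"
proof -
  have "\<psi> i j k = \<psi> j k i" by (rule skew3_cycle[OF assms])
  also have "\<dots> = - \<psi> k j i" by (rule skew3_swap12[OF assms])
  also have "\<dots> = - \<psi> i k j" using skew3_cycle[OF assms, of i k j] by simp
  finally show ?thesis .
qed

lemma skew3_repeat12: "skew3 \<psi> \<Longrightarrow> \<psi> i i k = 0"
  using skew3_swap12[of \<psi> i i k] by linarith

lemma skew3_repeat23: "skew3 \<psi> \<Longrightarrow> \<psi> i j j = 0"
  using skew3_swap23[of \<psi> i j j] by linarith

lemma skew3_eq_0_if_increasing: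
  fixes \<psi> :: "'i::linorder \<Rightarrow> 'i \<Rightarrow> 'i \<Rightarrow> real"
  assumes skew: "skew3 \<psi>"
    and incr: "\<And>i j k. i \<in> A \<Longrightarrow> j \<in> A \<Longrightarrow> k \<in> A \<Longrightarrow> i < j \<Longrightarrow> j < k \<Longrightarrow> \<psi> i j k = 0"
    and A: "i \<in> A" "j \<in> A" "k \<in> A"
  shows "\<psi> i j k = 0"
proof -
  note swap12 = skew3_swap12[OF skew] and swap23 = skew3_swap23[OF skew]
    and cycle = skew3_cycle[OF skew]
  consider "i < j" "j < k" | "i < k" "k < j" | "j < i" "i < k" | "j < k" "k < i"
    | "k < i" "i < j" | "k < j" "j < i" | "i = j" | "j = k" | "i = k"
    by (metis linorder_neqE)
  then show ?thesis
  proof cases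
    case 1
    then show ?thesis using incr A by blast
  next
    case 2
    then show ?thesis using incr[of i k j] A swap23[of i j k] by simp
  next
    case 3
    then show ?thesis using incr[of j i k] A swap12[of i j k] by simp
  next
    case 4
    then show ?thesis using incr[of j k i] A cycle[of i j k] by simp
  next
    case 5
    then show ?thesis using incr[of k i j] A cycle[of k i j] by simp
  next
    case 6
    then show ?thesis using incr[of k j i] A cycle[of k j i] swap12[of i j k] by simp
  next
    case 7
    then show ?thesis using skew3_repeat12[OF skew] by simp
  next
    case 8
    then show ?thesis using skew3_repeat23[OF skew] by simp
  next
    case 9
    then show ?thesis using skew3_repeat23[OF skew] cycle[of k j k] by simp
  qed
qed

lemma sum_atLeast1_atMost7:
  "(\<Sum>s\<in>{1..7::nat}. f s) = f 1 + f 2 + f 3 + f 4 + f 5 + f 6 + (f 7 :: real)"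
  by (simp add: sum.atLeast_Suc_atMost numeral_eq_Suc)

lemma atLeast1_atMost7_eq: "{1..7::nat} = {1, 2, 3, 4, 5, 6, 7}"
  by auto

(* A s p is the s-th coordinate of the image of the p-th basis vector. *)
definition annihilates_phi_split :: "(nat \<Rightarrow> nat \<Rightarrow> real) \<Rightarrow> bool" where
  "annihilates_phi_split A \<longleftrightarrow> (\<forall>p\<in>{1..7}. \<forall>q\<in>{1..7}. \<forall>r\<in>{1..7}.
     (\<Sum>s\<in>{1..7}. A s p * phi_split s q r) + (\<Sum>s\<in>{1..7}. A s q * phi_split p s r)
       + (\<Sum>s\<in>{1..7}. A s r * phi_split p q s) = 0)"

(* The matrix (\<lambda>s p. g_split s s * \<psi> i p s) is ad(e_i) when \<psi> i j k = <[e_i, e_j], e_k> and the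
   scalar product is g_split. *)
lemma skew3_annihilating_phi_split_increasing_eq_0:
  fixes \<psi> :: "nat \<Rightarrow> nat \<Rightarrow> nat \<Rightarrow> real"
  assumes skew: "skew3 \<psi>"
    and ann: "\<And>i. i \<in> {1..7} \<Longrightarrow> annihilates_phi_split (\<lambda>s p. g_split s s * \<psi> i p s)"
    and "i \<in> {1..7}" "j \<in> {1..7}" "k \<in> {1..7}" "i < j" "j < k"
  shows "\<psi> i j k = 0"
proof -
  have swap: "\<And>i j k. j < i \<Longrightarrow> \<psi> i j k = - \<psi> j i k"
    "\<And>i j k. k < j \<Longrightarrow> \<psi> i j k = - \<psi> i k j"
    using skew3_swap12[OF skew] skew3_swap23[OF skew] by blast+
  note coords = phi_split_def elem3_def kd_def g_split_def swap
    skew3_repeat12[OF skew] skew3_repeat23[OF skew]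
  have eq: "(\<Sum>s\<in>{1..7}. g_split s s * \<psi> i p s * phi_split s q r)
    + (\<Sum>s\<in>{1..7}. g_split s s * \<psi> i q s * phi_split p s r)
    + (\<Sum>s\<in>{1..7}. g_split s s * \<psi> i r s * phi_split p q s) = 0"
    if "i \<in> {1..7}" "p \<in> {1..7}" "q \<in> {1..7}" "r \<in> {1..7}" for i p q r
    using ann[OF that(1)] that(2-4) by (simp add: annihilates_phi_split_def)
  note expanded = eq[unfolded sum_atLeast1_atMost7]
  \<comment> \<open>The instances are chosen so that the 35 relations form a nonsingular linear system
    for the 35 components \<psi> i j k with i < j < k.\<close>
  have "\<psi> 1 2 5 + \<psi> 1 3 4 = 0" using expanded[of 1 1 2 4] by (simp add: coords)
  moreover have "\<psi> 1 2 4 = \<psi> 1 3 5" using expanded[of 1 1 2 5] by (simp add: coords)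
  moreover have "\<psi> 1 2 7 + \<psi> 1 3 6 = 0" using expanded[of 1 1 2 6] by (simp add: coords)
  moreover have "\<psi> 1 2 6 = \<psi> 1 3 7" using expanded[of 1 1 2 7] by (simp add: coords)
  moreover have "\<psi> 1 4 7 + \<psi> 1 5 6 = 0" using expanded[of 1 1 4 6] by (simp add: coords)
  moreover have "\<psi> 1 4 6 = \<psi> 1 5 7" using expanded[of 1 1 4 7] by (simp add: coords)
  moreover have "\<psi> 1 2 3 = \<psi> 1 4 5 + \<psi> 1 6 7" using expanded[of 1 2 4 7] by (simp add: coords)
  moreover have "\<psi> 1 2 6 + \<psi> 2 3 4 = 0" using expanded[of 2 1 2 4] by (simp add: coords)
  moreover have "\<psi> 1 2 7 = \<psi> 2 3 5" using expanded[of 2 1 2 5] by (simp add: coords)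
  moreover have "\<psi> 1 2 4 = \<psi> 2 3 6" using expanded[of 2 1 2 6] by (simp add: coords)
  moreover have "\<psi> 1 2 5 + \<psi> 2 3 7 = 0" using expanded[of 2 1 2 7] by (simp add: coords)
  moreover have "\<psi> 2 4 7 + \<psi> 2 5 6 = 0" using expanded[of 2 1 4 6] by (simp add: coords)
  moreover have "\<psi> 2 4 6 = \<psi> 1 2 3 + \<psi> 2 5 7" using expanded[of 2 1 4 7] by (simp add: coords)
  moreover have "\<psi> 2 4 5 + \<psi> 2 6 7 = 0" using expanded[of 2 2 4 7] by (simp add: coords)
  moreover have "\<psi> 2 3 5 = \<psi> 1 3 6" using expanded[of 3 1 2 4] by (simp add: coords)
  moreover have "\<psi> 1 3 7 = \<psi> 2 3 4" using expanded[of 3 1 2 5] by (simp add: coords)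
  moreover have "\<psi> 1 3 4 + \<psi> 2 3 7 = 0" using expanded[of 3 1 2 6] by (simp add: coords)
  moreover have "\<psi> 1 3 5 + \<psi> 2 3 6 = 0" using expanded[of 3 1 2 7] by (simp add: coords)
  moreover have "\<psi> 1 2 3 + \<psi> 3 4 7 + \<psi> 3 5 6 = 0" using expanded[of 3 1 4 6] by (simp add: coords)
  moreover have "\<psi> 3 4 6 = \<psi> 3 5 7" using expanded[of 3 1 4 7] by (simp add: coords)
  moreover have "\<psi> 3 4 5 + \<psi> 3 6 7 = 0" using expanded[of 3 2 4 7] by (simp add: coords)
  moreover have "\<psi> 2 4 5 = \<psi> 1 4 6" using expanded[of 4 1 2 4] by (simp add: coords)
  moreover have "\<psi> 1 4 7 + \<psi> 3 4 5 = 0" using expanded[of 4 1 2 5] by (simp add: coords)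
  moreover have "\<psi> 2 4 7 + \<psi> 3 4 6 = 0" using expanded[of 4 1 2 6] by (simp add: coords)
  moreover have "\<psi> 3 4 7 = \<psi> 1 4 5 + \<psi> 2 4 6" using expanded[of 4 1 2 7] by (simp add: coords)
  moreover have "\<psi> 1 2 4 + \<psi> 4 5 6 = 0" using expanded[of 4 1 4 6] by (simp add: coords)
  moreover have "\<psi> 1 3 4 = \<psi> 4 5 7" using expanded[of 4 1 4 7] by (simp add: coords)
  moreover have "\<psi> 2 3 4 = \<psi> 4 6 7" using expanded[of 4 2 4 7] by (simp add: coords)
  moreover have "\<psi> 1 5 6 + \<psi> 3 4 5 = 0" using expanded[of 5 1 2 4] by (simp add: coords)
  moreover have "\<psi> 1 5 7 + \<psi> 2 4 5 = 0" using expanded[of 5 1 2 5] by (simp add: coords)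
  moreover have "\<psi> 2 5 7 + \<psi> 3 5 6 = \<psi> 1 4 5" using expanded[of 5 1 2 6] by (simp add: coords)
  moreover have "\<psi> 2 3 5 = \<psi> 5 6 7" using expanded[of 5 2 4 7] by (simp add: coords)
  moreover have "\<psi> 2 5 6 + \<psi> 3 4 6 = 0" using expanded[of 6 1 2 4] by (simp add: coords)
  moreover have "\<psi> 1 6 7 + \<psi> 2 4 6 = \<psi> 3 5 6" using expanded[of 6 1 2 5] by (simp add: coords)
  moreover have "\<psi> 1 6 7 = \<psi> 2 5 7 + \<psi> 3 4 7" using expanded[of 7 1 2 4] by (simp add: coords)
  ultimately have "\<psi> 1 2 3 = 0 \<and> \<psi> 1 2 4 = 0 \<and> \<psi> 1 2 5 = 0 \<and> \<psi> 1 2 6 = 0 \<and> \<psi> 1 2 7 = 0 \<and>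
    \<psi> 1 3 4 = 0 \<and> \<psi> 1 3 5 = 0 \<and> \<psi> 1 3 6 = 0 \<and> \<psi> 1 3 7 = 0 \<and> \<psi> 1 4 5 = 0 \<and>
    \<psi> 1 4 6 = 0 \<and> \<psi> 1 4 7 = 0 \<and> \<psi> 1 5 6 = 0 \<and> \<psi> 1 5 7 = 0 \<and> \<psi> 1 6 7 = 0 \<and>
    \<psi> 2 3 4 = 0 \<and> \<psi> 2 3 5 = 0 \<and> \<psi> 2 3 6 = 0 \<and> \<psi> 2 3 7 = 0 \<and> \<psi> 2 4 5 = 0 \<and>
    \<psi> 2 4 6 = 0 \<and> \<psi> 2 4 7 = 0 \<and> \<psi> 2 5 6 = 0 \<and> \<psi> 2 5 7 = 0 \<and> \<psi> 2 6 7 = 0 \<and>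
    \<psi> 3 4 5 = 0 \<and> \<psi> 3 4 6 = 0 \<and> \<psi> 3 4 7 = 0 \<and> \<psi> 3 5 6 = 0 \<and> \<psi> 3 5 7 = 0 \<and>
    \<psi> 3 6 7 = 0 \<and> \<psi> 4 5 6 = 0 \<and> \<psi> 4 5 7 = 0 \<and> \<psi> 4 6 7 = 0 \<and> \<psi> 5 6 7 = 0"
    by (intro conjI; linarith)
  then have "\<forall>i\<in>{1, 2, 3, 4, 5, 6, 7}. \<forall>j\<in>{1, 2, 3, 4, 5, 6, 7}. \<forall>k\<in>{1, 2, 3, 4, 5, 6, 7}.
      i < j \<longrightarrow> j < k \<longrightarrow> \<psi> i j k = 0"
    by simp
  then show ?thesis
    using assms(3-7) unfolding atLeast1_atMost7_eq by blast
qed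

lemma skew3_annihilating_phi_split_eq_0:
  fixes \<psi> :: "nat \<Rightarrow> nat \<Rightarrow> nat \<Rightarrow> real"
  assumes skew: "skew3 \<psi>"
    and ann: "\<And>i. i \<in> {1..7} \<Longrightarrow> annihilates_phi_split (\<lambda>s p. g_split s s * \<psi> i p s)"
    and "i \<in> {1..7}" "j \<in> {1..7}" "k \<in> {1..7}"
  shows "\<psi> i j k = 0"
  by (rule skew3_eq_0_if_increasing[OF skew _ assms(3-5)])
    (rule skew3_annihilating_phi_split_increasing_eq_0[OF skew ann])

lemma span_eq_UNIV_if_card_eq_DIM:
  fixes b :: "'i \<Rightarrow> 'a::euclidean_space"
  assumes "inj_on b I" and "independent (b ` I)" and "card I = DIM('a)"
  shows "span (b ` I) = UNIV"
  using card_ge_dim_independent[of "b ` I" UNIV] assms by (auto simp: card_image)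

lemma bilinear_alternating_skew:
  fixes f :: "'a::real_vector \<Rightarrow> 'a \<Rightarrow> 'b::real_vector"
  assumes "bilinear f" and "\<And>x. f x x = 0"
  shows "f x y = - f y x"
proof -
  have "0 = f (x + y) (x + y)" using assms(2) by simp
  also have "\<dots> = f x x + f x y + f y x + f y y"
    using assms(1) by (simp add: bilinear_ladd bilinear_radd)
  finally show ?thesis using assms(2) by (simp add: eq_neg_iff_add_eq_0)
qed

lemma bilinear_zero: "bilinear (\<lambda>x y. 0)"
  by (simp add: bilinear_def linear_zero)

lemma bilinear_eq_0_on_spanning:
  assumes "bilinear f" and "span S = UNIV" and "\<And>x y. x \<in> S \<Longrightarrow> y \<in> S \<Longrightarrow> f x y = 0"
  shows "f x y = 0"
  by (rule bilinear_eq[OF assms(1) bilinear_zero, of UNIV S UNIV S]) (use assms(2,3) in auto)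

lemma lie_bracket_bilinear: "lie_bracket br \<Longrightarrow> bilinear br"
  unfolding lie_bracket_def bilinear_def by blast

lemma lie_bracket_skew: "lie_bracket br \<Longrightarrow> br x y = - br y x"
  by (rule bilinear_alternating_skew[OF lie_bracket_bilinear]) (auto simp only: lie_bracket_def)

lemma invariant_scalar_product_sym: "invariant_scalar_product br B \<Longrightarrow> B x y = B y x"
  unfolding invariant_scalar_product_def by blast

lemma invariant_scalar_product_nondegenerate:
  "invariant_scalar_product br B \<Longrightarrow> \<forall>y. B x y = 0 \<Longrightarrow> x = 0"
  unfolding invariant_scalar_product_def by blast

lemma invariant_scalar_product_bilinear:
  assumes "invariant_scalar_product br B"
  shows "bilinear B"
proof -
  have "(\<lambda>x. B x y) = B y" for y
    using invariant_scalar_product_sym[OF assms] by auto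
  then show ?thesis using assms unfolding invariant_scalar_product_def bilinear_def by simp
qed

lemma nondegenerate_orthogonal_expansion:
  fixes B :: "'a::real_vector \<Rightarrow> 'a \<Rightarrow> real" and b :: "'i \<Rightarrow> 'a"
  assumes bil: "bilinear B" and sym: "\<And>x y. B x y = B y x"
    and nondeg: "\<And>x. \<forall>y. B x y = 0 \<Longrightarrow> x = 0"
    and "finite I" and spans: "span (b ` I) = UNIV"
    and orth: "\<And>s t. s \<in> I \<Longrightarrow> t \<in> I \<Longrightarrow> s \<noteq> t \<Longrightarrow> B (b s) (b t) = 0"
    and nonnull: "\<And>s. s \<in> I \<Longrightarrow> B (b s) (b s) \<noteq> 0"
  shows "v = (\<Sum>s\<in>I. (B v (b s) / B (b s) (b s)) *\<^sub>R b s)"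
proof -
  define w where "w = v - (\<Sum>s\<in>I. (B v (b s) / B (b s) (b s)) *\<^sub>R b s)"
  have lin1: "linear (\<lambda>x. B x y)" and lin2: "linear (B x)" for x y
    using bil by (simp_all add: bilinear_def)
  have "B (b t) w = 0" if "t \<in> I" for t
  proof -
    have "(\<Sum>s\<in>I. (B v (b s) / B (b s) (b s)) * B (b t) (b s))
        = (\<Sum>s\<in>I. if s = t then B v (b t) else 0)"
      using that orth nonnull by (intro sum.cong) auto
    also have "\<dots> = B v (b t)" using \<open>finite I\<close> that by simp
    finally show ?thesis
      by (simp add: w_def linear_diff[OF lin2] linear_sum[OF lin2] linear_scale[OF lin2] sym)
  qed
  then have "B y w = 0" for y
    using linear_eq_0_on_span[OF lin1[of w], of "b ` I" y] spans by auto
  then have "w = 0" using nondeg sym by metis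
  then show ?thesis by (simp add: w_def)
qed

lemma invariant_scalar_product_split_expansion:
  assumes B: "invariant_scalar_product br B" and spans: "span (b ` {1..7}) = UNIV" and "c \<noteq> 0"
    and Bb: "\<forall>i\<in>{1..7}. \<forall>j\<in>{1..7}. B (b i) (b j) = c * g_split i j"
  shows "v = (\<Sum>s\<in>{1..7}. (g_split s s * (B v (b s) / c)) *\<^sub>R b s)"
proof -
  have "v = (\<Sum>s\<in>{1..7}. (B v (b s) / B (b s) (b s)) *\<^sub>R b s)"
    using invariant_scalar_product_bilinear[OF B] invariant_scalar_product_sym[OF B]
      invariant_scalar_product_nondegenerate[OF B] _ spans
    by (rule nondegenerate_orthogonal_expansion) (use Bb \<open>c \<noteq> 0\<close> in \<open>auto simp: g_split_def\<close>)
  also have "\<dots> = (\<Sum>s\<in>{1..7}. (g_split s s * (B v (b s) / c)) *\<^sub>R b s)"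
    using Bb by (intro sum.cong) (auto simp: g_split_def)
  finally show ?thesis .
qed

lemma structure_constants_skew3:
  assumes br: "lie_bracket br" and B: "invariant_scalar_product br B"
  shows "skew3 (\<lambda>i j k. B (br (b i) (b j)) (b k) / c)"
  unfolding skew3_def
proof (intro conjI allI)
  fix i j k
  have "B (br (b j) (b i)) (b k) = - B (br (b i) (b j)) (b k)"
    using lie_bracket_skew[OF br, of "b j" "b i"] bilinear_lneg[OF invariant_scalar_product_bilinear[OF B]]
    by simp
  then show "B (br (b j) (b i)) (b k) / c = - (B (br (b i) (b j)) (b k) / c)" by simp
  have "B (br (b i) (b j)) (b k) = B (b i) (br (b j) (b k))"
    using B unfolding invariant_scalar_product_def by blast
  then show "B (br (b j) (b k)) (b i) / c = B (br (b i) (b j)) (b k) / c"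
    using invariant_scalar_product_sym[OF B] by metis
qed

lemma linear_sum_scaleR_real:
  fixes f :: "'a::real_vector \<Rightarrow> real"
  assumes "linear f"
  shows "f (\<Sum>s\<in>I. a s *\<^sub>R v s) = (\<Sum>s\<in>I. a s * f (v s))"
  unfolding linear_sum[OF assms] linear_scale[OF assms] by simp

lemma annihilates_phi_split_of_derivation:
  fixes \<phi> :: "'a::real_vector \<Rightarrow> 'a \<Rightarrow> 'a \<Rightarrow> real" and D :: "'a \<Rightarrow> 'a"
  assumes lin1: "\<forall>y z. linear (\<lambda>x. \<phi> x y z)" and lin2: "\<forall>x z. linear (\<lambda>y. \<phi> x y z)"
    and lin3: "\<forall>x y. linear (\<lambda>z. \<phi> x y z)"
    and \<phi>b: "\<forall>i\<in>{1..7}. \<forall>j\<in>{1..7}. \<forall>k\<in>{1..7}. \<phi> (b i) (b j) (b k) = phi_split i j k"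
    and Db: "\<And>p. p \<in> {1..7} \<Longrightarrow> D (b p) = (\<Sum>s\<in>{1..7}. A s p *\<^sub>R b s)"
    and ann: "\<And>u v w. \<phi> (D u) v w + \<phi> u (D v) w + \<phi> u v (D w) = 0"
  shows "annihilates_phi_split A"
  unfolding annihilates_phi_split_def
proof (intro ballI)
  fix p q r :: nat
  assume pqr: "p \<in> {1..7}" "q \<in> {1..7}" "r \<in> {1..7}"
  have "\<phi> (D (b p)) (b q) (b r) = (\<Sum>s\<in>{1..7}. A s p * phi_split s q r)"
    unfolding Db[OF pqr(1)] linear_sum_scaleR_real[OF lin1[rule_format]]
    by (rule sum.cong) (use \<phi>b pqr in auto)
  moreover have "\<phi> (b p) (D (b q)) (b r) = (\<Sum>s\<in>{1..7}. A s q * phi_split p s r)"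
    unfolding Db[OF pqr(2)] linear_sum_scaleR_real[OF lin2[rule_format]]
    by (rule sum.cong) (use \<phi>b pqr in auto)
  moreover have "\<phi> (b p) (b q) (D (b r)) = (\<Sum>s\<in>{1..7}. A s r * phi_split p q s)"
    unfolding Db[OF pqr(3)] linear_sum_scaleR_real[OF lin3[rule_format]]
    by (rule sum.cong) (use \<phi>b pqr in auto)
  ultimately show "(\<Sum>s\<in>{1..7}. A s p * phi_split s q r) + (\<Sum>s\<in>{1..7}. A s q * phi_split p s r)
      + (\<Sum>s\<in>{1..7}. A s r * phi_split p q s) = 0"
    using ann[of "b p" "b q" "b r"] by simp
qed

theorem lemma3p9:
  fixes br :: "real^7 \<Rightarrow> real^7 \<Rightarrow> real^7"
    and B :: "real^7 \<Rightarrow> real^7 \<Rightarrow> real"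
  assumes "lie_bracket br"
    and "nilpotent_lie br"
    and "\<not> abelian_lie br"
    and "invariant_scalar_product br B"
    and "index_three B"
  shows "\<not> (\<exists>\<phi>. g22_form_compatible B \<phi> \<and> (\<forall>x. ad_annihilates br \<phi> x))"
proof
  assume "\<exists>\<phi>. g22_form_compatible B \<phi> \<and> (\<forall>x. ad_annihilates br \<phi> x)"
  then obtain \<phi> b c where trilinear: "\<forall>y z. linear (\<lambda>x. \<phi> x y z)" "\<forall>x z. linear (\<lambda>y. \<phi> x y z)"
      "\<forall>x y. linear (\<lambda>z. \<phi> x y z)"
    and basis: "inj_on b {1..7}" "independent (b ` {1..7})" and "c \<noteq> 0"
    and \<phi>b: "\<forall>i\<in>{1..7}. \<forall>j\<in>{1..7}. \<forall>k\<in>{1..7}. \<phi> (b i) (b j) (b k) = phi_split i j k"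
    and Bb: "\<forall>i\<in>{1..7}. \<forall>j\<in>{1..7}. B (b i) (b j) = c * g_split i j"
    and ad: "\<forall>x. ad_annihilates br \<phi> x"
    unfolding g22_form_compatible_def by blast
  have spans: "span (b ` {1..7}) = UNIV"
    using span_eq_UNIV_if_card_eq_DIM[OF basis] by simp
  define \<psi> where "\<psi> i j k = B (br (b i) (b j)) (b k) / c" for i j k
  have skew: "skew3 \<psi>"
    unfolding \<psi>_def by (rule structure_constants_skew3[OF assms(1,4)])
  have ad_matrix: "br (b i) (b p) = (\<Sum>s\<in>{1..7}. (g_split s s * \<psi> i p s) *\<^sub>R b s)" for i p
    unfolding \<psi>_def by (rule invariant_scalar_product_split_expansion[OF assms(4) spans \<open>c \<noteq> 0\<close> Bb])
  have "annihilates_phi_split (\<lambda>s p. g_split s s * \<psi> i p s)" for i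
    by (rule annihilates_phi_split_of_derivation[OF trilinear \<phi>b, where D = "br (b i)"])
      (use ad ad_matrix in \<open>simp_all add: ad_annihilates_def\<close>)
  then have "br (b i) (b p) = 0" if "i \<in> {1..7}" "p \<in> {1..7}" for i p
    using ad_matrix skew3_annihilating_phi_split_eq_0[OF skew] that by simp
  then have "br x y = 0" for x y
    using bilinear_eq_0_on_spanning[OF lie_bracket_bilinear[OF assms(1)] spans] by blast
  with assms(3) show False by (simp add: abelian_lie_def)
qed

end
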